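(* Let $p_1,\ldots,p_m\in[0,1]$ and $\alpha\in[0,1]$, and let $h=h_\alpha$, $d_\alpha$, $z=z_\alpha$, $Z=Z_\alpha$ and $B=B_\alpha$ be as in the context. Then: (1) $d_\alpha(S)=d_\alpha(S\cap Z)$ for all $S\subseteq\{1,\ldots,m\}$; (2) $Z$ is minimal, i.e. if $Y\subseteq\{1,\ldots,m\}$ satisfies $d_\alpha(S)=d_\alpha(S\cap Y)$ for all $S\subseteq\{1,\ldots,m\}$, then $Z\subseteq Y$; (3) $d_\alpha(Z)=m-h$; (4) $Z\subseteq B$.
   Context: Setting: $m$ hypotheses with $p$-values $p_1,\ldots,p_m\in[0,1]$; let $r_1,\ldots,r_m$ be a permutation of $1,\ldots,m$ with $p_{r_1}\le\cdots\le p_{r_m}$, write $p_{(i)}=p_{r_i}$, $L_i=\{r_1,\ldots,r_i\}$ and $K_i=\{r_{m-i+1},\ldots,r_m\}$ for $0\le i\le m$. For $I\subseteq\{1,\ldots,m\}$, $p_{(i:I)}$ is the $i$-th smallest of $\{p_j:j\in I\}$. Simes local test: $I\in\mathcal{U}_\alpha$ iff there is $1\le i\le|I|$ with $|I|p_{(i:I)}\le i\alpha$. Closed testing: $\mathcal{X}_\alpha=\{I: J\in\mathcal{U}_\alpha\ \forall J\supseteq I\}$. For $S\subseteq\{1,\ldots,m\}$: $t_\alpha(S)=\max\{|I|: I\subseteq S, I\notin\mathcal{X}_\alpha\}$, $d_\alpha(S)=|S|-t_\alpha(S)$. $h_\alpha=\max\{0\le i\le m: K_i\notin\mathcal{U}_\alpha\}$.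 $z_\alpha=0$ if $h_\alpha=m$ and otherwise $z_\alpha=\min\{m-h_\alpha\le i\le m: h_\alpha p_{(i)}\le(i-m+h_\alpha+1)\alpha\}$; $Z_\alpha=L_{z_\alpha}$. Benjamini–Hochberg: $b_\alpha=\max\{1\le i\le m: m p_{(i)}\le i\alpha\}$ ($b_\alpha=0$ if no such $i$), $B_\alpha=L_{b_\alpha}$. *)

theory Defs
  imports Complex_Main
begin

definition sorting_perm :: "(nat \<Rightarrow> real) \<Rightarrow> nat \<Rightarrow> (nat \<Rightarrow> nat) \<Rightarrow> bool" where
  "sorting_perm p m r \<longleftrightarrow> bij_betw r {1..m} {1..m} \<and>
     (\<forall>i j. 1 \<le> i \<longrightarrow> i \<le> j \<longrightarrow> j \<le> m \<longrightarrow> p (r i) \<le> p (r j))"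

(* p_(i:I): the i-th smallest (1-based) of {p j : j \<in> I}, with multiplicity *)
definition pord :: "(nat \<Rightarrow> real) \<Rightarrow> nat set \<Rightarrow> nat \<Rightarrow> real" where
  "pord p I i = sort (map p (sorted_list_of_set I)) ! (i - 1)"

(* Simes local test: acceptance region U_alpha (sets of hypotheses rejected by Simes) *)
definition simesU :: "(nat \<Rightarrow> real) \<Rightarrow> nat \<Rightarrow> real \<Rightarrow> nat set set" where
  "simesU p m \<alpha> = {I. I \<subseteq> {1..m} \<and>
     (\<exists>i\<in>{1..card I}. real (card I) * pord p I i \<le> real i * \<alpha>)}"

definition closedX :: "(nat \<Rightarrow> real) \<Rightarrow> nat \<Rightarrow> real \<Rightarrow> nat set set" where
  "closedX p m \<alpha> = {I. I \<subseteq> {1..m} \<and>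
     (\<forall>J. I \<subseteq> J \<and> J \<subseteq> {1..m} \<longrightarrow> J \<in> simesU p m \<alpha>)}"

definition t_alpha :: "(nat \<Rightarrow> real) \<Rightarrow> nat \<Rightarrow> real \<Rightarrow> nat set \<Rightarrow> nat" where
  "t_alpha p m \<alpha> S = Max {card I | I. I \<subseteq> S \<and> I \<notin> closedX p m \<alpha>}"

definition d_alpha :: "(nat \<Rightarrow> real) \<Rightarrow> nat \<Rightarrow> real \<Rightarrow> nat set \<Rightarrow> nat" where
  "d_alpha p m \<alpha> S = card S - t_alpha p m \<alpha> S"

definition Lset :: "(nat \<Rightarrow> nat) \<Rightarrow> nat \<Rightarrow> nat set" where
  "Lset r i = r ` {1..i}"

definition Kset :: "(nat \<Rightarrow> nat) \<Rightarrow> nat \<Rightarrow> nat \<Rightarrow> nat set" where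
  "Kset r m i = r ` {m - i + 1..m}"

definition h_alpha :: "(nat \<Rightarrow> real) \<Rightarrow> nat \<Rightarrow> real \<Rightarrow> (nat \<Rightarrow> nat) \<Rightarrow> nat" where
  "h_alpha p m \<alpha> r = Max {i. i \<le> m \<and> Kset r m i \<notin> simesU p m \<alpha>}"

definition z_alpha :: "(nat \<Rightarrow> real) \<Rightarrow> nat \<Rightarrow> real \<Rightarrow> (nat \<Rightarrow> nat) \<Rightarrow> nat" where
  "z_alpha p m \<alpha> r = (let h = h_alpha p m \<alpha> r in
     if h = m then 0
     else Min {i. m - h \<le> i \<and> i \<le> m \<and>
                  real h * p (r i) \<le> (real i - real m + real h + 1) * \<alpha>})"

definition Z_alpha :: "(nat \<Rightarrow> real) \<Rightarrow> nat \<Rightarrow> real \<Rightarrow> (nat \<Rightarrow> nat) \<Rightarrow> nat set" where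
  "Z_alpha p m \<alpha> r = Lset r (z_alpha p m \<alpha> r)"

definition b_alpha :: "(nat \<Rightarrow> real) \<Rightarrow> nat \<Rightarrow> real \<Rightarrow> (nat \<Rightarrow> nat) \<Rightarrow> nat" where
  "b_alpha p m \<alpha> r = Max (insert 0 {i. 1 \<le> i \<and> i \<le> m \<and> real m * p (r i) \<le> real i * \<alpha>})"

definition B_alpha :: "(nat \<Rightarrow> real) \<Rightarrow> nat \<Rightarrow> real \<Rightarrow> (nat \<Rightarrow> nat) \<Rightarrow> nat set" where
  "B_alpha p m \<alpha> r = Lset r (b_alpha p m \<alpha> r)"

end

theory Submission
  imports Defs
begin

(* Write N_s(A,i) for the number of x in A with s p_x <= i alpha.  A set A escapes the Simes test
   iff N_|A|(A,i) < i for all i >= 1, and among sets of size n the set K_n of the n largest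
   p-values has the smallest counts; so h is the largest size of a Simes-accepted set.  A set I
   lies outside X_alpha iff N_h(I,i) < i for all i (pad I with the largest p-values up to size h),
   and therefore d_alpha(S) is the least D with N_h(S,i) < i + D for all i >= 1.
   The hypotheses counted by N_h(.,i) form an initial segment of the sorting.  With
   u = z + h + 1 - m, every hypothesis counted at an index i <= u lies in Z, while at i >= u all
   of Z is counted and at most i - u hypotheses outside Z; this yields (1)-(3).  For (4), the
   index witnessing that K_(h+1) is rejected satisfies both the inequality defining z and the
   Benjamini-Hochberg condition. *)

lemma sorted_nth_le_iff:
  fixes xs :: "real list"
  assumes "sorted xs" "1 \<le> i" "i \<le> length xs"
  shows "xs ! (i - 1) \<le> c \<longleftrightarrow> i \<le> length (filter (\<lambda>v. v \<le> c) xs)"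
proof
  assume le: "xs ! (i - 1) \<le> c"
  have "{0..<i} \<subseteq> {j. j < length xs \<and> xs ! j \<le> c}"
  proof
    fix j assume "j \<in> {0..<i}"
    then have "xs ! j \<le> xs ! (i - 1)"
      using assms by (simp add: sorted_iff_nth_mono)
    with le \<open>j \<in> {0..<i}\<close> assms show "j \<in> {j. j < length xs \<and> xs ! j \<le> c}" by auto
  qed
  then have "card {0..<i} \<le> card {j. j < length xs \<and> xs ! j \<le> c}"
    by (intro card_mono) auto
  then show "i \<le> length (filter (\<lambda>v. v \<le> c) xs)"
    by (simp add: length_filter_conv_card)
next
  assume i_le: "i \<le> length (filter (\<lambda>v. v \<le> c) xs)"
  show "xs ! (i - 1) \<le> c"
  proof (rule ccontr)
    assume gt: "\<not> xs ! (i - 1) \<le> c"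
    have "{j. j < length xs \<and> xs ! j \<le> c} \<subseteq> {0..<i - 1}"
    proof (rule subsetI, rule ccontr)
      fix j assume j: "j \<in> {j. j < length xs \<and> xs ! j \<le> c}" "j \<notin> {0..<i - 1}"
      then have "xs ! (i - 1) \<le> xs ! j"
        using assms(1) by (simp add: sorted_iff_nth_mono)
      with gt j show False by auto
    qed
    then have "card {j. j < length xs \<and> xs ! j \<le> c} \<le> card {0..<i - 1}"
      by (intro card_mono) auto
    with i_le assms show False by (simp add: length_filter_conv_card)
  qed
qed

lemma pord_le_iff:
  assumes "finite A" "1 \<le> i" "i \<le> card A"
  shows "pord p A i \<le> c \<longleftrightarrow> i \<le> card {x\<in>A. p x \<le> c}"
proof -
  define xs where "xs = sort (map p (sorted_list_of_set A))"
  have "length (filter (\<lambda>v. v \<le> c) xs) = length (filter (\<lambda>x. p x \<le> c) (sorted_list_of_set A))"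
    by (simp add: xs_def filter_sort filter_map o_def)
  also have "\<dots> = card {x\<in>A. p x \<le> c}"
    using assms(1) by (subst distinct_length_filter) (auto intro: arg_cong[where f = card])
  finally show ?thesis
    using sorted_nth_le_iff[of xs i c] assms by (simp add: pord_def xs_def)
qed

lemma card_filter_split:
  assumes "finite B" "A \<subseteq> B"
  shows "card {x\<in>B. P x} = card {x\<in>A. P x} + card {x\<in>B - A. P x}"
proof -
  have "{x\<in>B. P x} = {x\<in>A. P x} \<union> {x\<in>B - A. P x}" using assms(2) by auto
  moreover have "finite {x\<in>A. P x}" "finite {x\<in>B - A. P x}"
    using assms finite_subset[of A B] by auto
  moreover have "{x\<in>A. P x} \<inter> {x\<in>B - A. P x} = {}" by auto
  ultimately show ?thesis by (simp add: card_Un_disjoint)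
qed

lemma nat0_intermed_val:
  fixes f :: "nat \<Rightarrow> nat"
  assumes "\<And>k. k < n \<Longrightarrow> f (Suc k) \<le> Suc (f k)" "f 0 \<le> v" "v \<le> f n"
  shows "\<exists>k\<le>n. f k = v"
  using assms
proof (induction n)
  case (Suc n)
  show ?case
  proof (cases "v \<le> f n")
    case True
    with Suc obtain k where "k \<le> n" "f k = v" by auto
    then show ?thesis using le_SucI by blast
  next
    case False
    with Suc.prems have "f (Suc n) = v" by fastforce
    then show ?thesis by blast
  qed
qed simp

locale sorted_pvalues =
  fixes p :: "nat \<Rightarrow> real" and m :: nat and \<alpha> :: real and r :: "nat \<Rightarrow> nat"
  assumes p_nonneg: "\<And>j. j \<in> {1..m} \<Longrightarrow> 0 \<le> p j"
    and alpha_nonneg: "0 \<le> \<alpha>"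
    and sorting: "sorting_perm p m r"
begin

lemma r_inj: "inj_on r {1..m}"
  using sorting by (simp add: sorting_perm_def bij_betw_def)

lemma r_image: "r ` {1..m} = {1..m}"
  using sorting by (simp add: sorting_perm_def bij_betw_def)

lemma p_r_mono: "1 \<le> i \<Longrightarrow> i \<le> j \<Longrightarrow> j \<le> m \<Longrightarrow> p (r i) \<le> p (r j)"
  using sorting by (simp add: sorting_perm_def)

lemma card_r_image: "B \<subseteq> {1..m} \<Longrightarrow> card (r ` B) = card B"
  using r_inj by (meson card_image inj_on_subset)

lemma Lset_subset: "k \<le> m \<Longrightarrow> Lset r k \<subseteq> {1..m}"
  unfolding Lset_def using r_image by auto

lemma card_Lset: "k \<le> m \<Longrightarrow> card (Lset r k) = k"
  unfolding Lset_def by (subst card_r_image) auto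

lemma Lset_Suc: "Lset r (Suc k) = insert (r (Suc k)) (Lset r k)"
  unfolding Lset_def by (auto simp: atLeastAtMostSuc_conv)

lemma Lset_m: "Lset r m = {1..m}"
  unfolding Lset_def using r_image .

lemma Kset_subset: "n \<le> m \<Longrightarrow> Kset r m n \<subseteq> {1..m}"
  unfolding Kset_def using r_image by auto

lemma card_Kset: "n \<le> m \<Longrightarrow> card (Kset r m n) = n"
  unfolding Kset_def by (subst card_r_image) auto

lemma Kset_0: "Kset r m 0 = {}"
  by (simp add: Kset_def)

lemma Kset_m: "Kset r m m = {1..m}"
  unfolding Kset_def using r_image by simp

lemma Kset_Suc: "n < m \<Longrightarrow> Kset r m (Suc n) = insert (r (m - n)) (Kset r m n)"
proof -
  assume "n < m"
  then have "{m - Suc n + 1..m} = insert (m - n) {m - n + 1..m}" by auto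
  then show ?thesis unfolding Kset_def by simp
qed

lemma Diff_Kset: "n \<le> m \<Longrightarrow> {1..m} - Kset r m n = Lset r (m - n)"
proof -
  assume "n \<le> m"
  have "{1..m} - Kset r m n = r ` {1..m} - r ` {m - n + 1..m}"
    unfolding Kset_def r_image ..
  also have "\<dots> = r ` ({1..m} - {m - n + 1..m})"
    using r_inj by (subst inj_on_image_set_diff[where C = "{1..m}"]) auto
  also have "{1..m} - {m - n + 1..m} = {1..m - n}"
    using \<open>n \<le> m\<close> by auto
  finally show ?thesis by (simp add: Lset_def)
qed

lemma Lset_below:
  assumes "j \<in> {1..m}" "real s * p (r j) \<le> c" "k \<le> j" "x \<in> Lset r k"
  shows "real s * p x \<le> c"
proof -
  obtain i where i: "i \<in> {1..k}" "x = r i" using assms(4) by (auto simp: Lset_def)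
  then have "p x \<le> p (r j)" using assms p_r_mono by auto
  then have "real s * p x \<le> real s * p (r j)" by (simp add: mult_left_mono)
  with assms(2) show ?thesis by linarith
qed

lemma rank_below_iff:
  assumes j: "j \<in> {1..m}"
  shows "real s * p (r j) \<le> c \<longleftrightarrow> j \<le> card {x\<in>{1..m}. real s * p x \<le> c}"
proof
  assume "real s * p (r j) \<le> c"
  then have "Lset r j \<subseteq> {x\<in>{1..m}. real s * p x \<le> c}"
    using Lset_below[OF j, of s c j] Lset_subset[of j] j by auto
  then have "card (Lset r j) \<le> card {x\<in>{1..m}. real s * p x \<le> c}"
    by (intro card_mono) auto
  then show "j \<le> card {x\<in>{1..m}. real s * p x \<le> c}"
    using card_Lset j by simp
next
  assume j_le: "j \<le> card {x\<in>{1..m}. real s * p x \<le> c}"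
  show "real s * p (r j) \<le> c"
  proof (rule ccontr)
    assume above: "\<not> real s * p (r j) \<le> c"
    have "{x\<in>{1..m}. real s * p x \<le> c} \<subseteq> Lset r (j - 1)"
    proof
      fix x assume x: "x \<in> {x\<in>{1..m}. real s * p x \<le> c}"
      then have "x \<in> r ` {1..m}" using r_image by simp
      then obtain i where i: "i \<in> {1..m}" "x = r i" by blast
      have "i < j"
      proof (rule ccontr)
        assume "\<not> i < j"
        then have "r j \<in> Lset r i" using j by (auto simp: Lset_def)
        moreover have "real s * p (r i) \<le> c" using x i by simp
        ultimately show False using Lset_below[OF i(1), of s c i "r j"] above by simp
      qed
      then show "x \<in> Lset r (j - 1)" using i by (auto simp: Lset_def)
    qed
    then have "card {x\<in>{1..m}. real s * p x \<le> c} \<le> card (Lset r (j - 1))"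
      by (intro card_mono) (auto simp: Lset_def)
    then have "card {x\<in>{1..m}. real s * p x \<le> c} \<le> j - 1"
      using card_Lset[of "j - 1"] j by auto
    with j_le j show False by auto
  qed
qed

section \<open>Simes counts\<close>

definition below_count :: "nat \<Rightarrow> nat set \<Rightarrow> nat \<Rightarrow> nat" where
  "below_count s A i = card {x\<in>A. real s * p x \<le> real i * \<alpha>}"

lemma below_count_le_card: "finite A \<Longrightarrow> below_count s A i \<le> card A"
  unfolding below_count_def by (intro card_mono) auto

lemma below_count_mono: "A \<subseteq> B \<Longrightarrow> finite B \<Longrightarrow> below_count s A i \<le> below_count s B i"
  unfolding below_count_def by (intro card_mono) auto

lemma below_count_antimono_scale:
  assumes "A \<subseteq> {1..m}" "s \<le> s'"
  shows "below_count s' A i \<le> below_count s A i"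
  unfolding below_count_def
proof (intro card_mono)
  have "finite A" using assms(1) finite_subset by blast
  then show "finite {x\<in>A. real s * p x \<le> real i * \<alpha>}" by simp
  show "{x\<in>A. real s' * p x \<le> real i * \<alpha>} \<subseteq> {x\<in>A. real s * p x \<le> real i * \<alpha>}"
  proof
    fix x assume x: "x \<in> {x\<in>A. real s' * p x \<le> real i * \<alpha>}"
    then have "0 \<le> p x" using assms(1) p_nonneg by auto
    then have "real s * p x \<le> real s' * p x" using assms(2) by (simp add: mult_right_mono)
    with x show "x \<in> {x\<in>A. real s * p x \<le> real i * \<alpha>}" by auto
  qed
qed

lemma below_count_split:
  "finite B \<Longrightarrow> A \<subseteq> B \<Longrightarrow>
    below_count s B i = below_count s A i + card {x\<in>B - A. real s * p x \<le> real i * \<alpha>}"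
  unfolding below_count_def by (rule card_filter_split)

lemma below_count_superset_le:
  "finite B \<Longrightarrow> A \<subseteq> B \<Longrightarrow> below_count s B i \<le> below_count s A i + card (B - A)"
proof -
  assume "finite B" "A \<subseteq> B"
  then have "card {x\<in>B - A. real s * p x \<le> real i * \<alpha>} \<le> card (B - A)"
    by (intro card_mono) auto
  with below_count_split[OF \<open>finite B\<close> \<open>A \<subseteq> B\<close>, of s i] show ?thesis by linarith
qed

text \<open>Once the hypotheses of largest \<open>p\<close>-value reach the threshold, so does every other.\<close>

lemma below_count_all_eq:
  assumes n: "n \<le> m" and J: "Kset r m n \<subseteq> J" "J \<subseteq> {1..m}"
    and nonzero: "below_count s (Kset r m n) i \<noteq> 0"
  shows "below_count s {1..m} i = below_count s J i + (m - card J)"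
proof -
  have "{x\<in>Kset r m n. real s * p x \<le> real i * \<alpha>} \<noteq> {}"
    using nonzero by (metis card.empty below_count_def)
  then obtain x where x: "x \<in> Kset r m n" "real s * p x \<le> real i * \<alpha>" by blast
  then obtain j where j: "j \<in> {m - n + 1..m}" "x = r j" by (auto simp: Kset_def)
  have "{1..m} - J \<subseteq> Lset r (m - n)"
    using J(1) Diff_Kset[OF n] by blast
  then have "\<forall>y\<in>{1..m} - J. real s * p y \<le> real i * \<alpha>"
    using Lset_below[of j s "real i * \<alpha>" "m - n"] x j by auto
  then have "{y\<in>{1..m} - J. real s * p y \<le> real i * \<alpha>} = {1..m} - J" by blast
  then show ?thesis
    using below_count_split[OF _ J(2), of s i] J(2) by (simp add: card_Diff_subset finite_subset)
qed

lemma below_count_Kset_le: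
  assumes A: "A \<subseteq> {1..m}"
  shows "below_count s (Kset r m (card A)) i \<le> below_count s A i"
proof (cases "below_count s (Kset r m (card A)) i = 0")
  case False
  have n: "card A \<le> m" using card_mono[OF _ A] by simp
  have "below_count s {1..m} i = below_count s (Kset r m (card A)) i + (m - card A)"
    using below_count_all_eq[OF n order_refl Kset_subset[OF n] False] card_Kset[OF n] by simp
  moreover have "below_count s {1..m} i \<le> below_count s A i + (m - card A)"
    using below_count_superset_le[OF _ A] A by (simp add: card_Diff_subset finite_subset)
  ultimately show ?thesis by simp
qed simp

definition excess_le :: "nat \<Rightarrow> nat set \<Rightarrow> nat \<Rightarrow> bool" where
  "excess_le s A D \<longleftrightarrow> (\<forall>i\<ge>1. below_count s A i < i + D)"

lemma excess_leD: "excess_le s A D \<Longrightarrow> 1 \<le> i \<Longrightarrow> below_count s A i < i + D"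
  by (simp add: excess_le_def)

lemma excess_le_mono: "excess_le s A D \<Longrightarrow> D \<le> D' \<Longrightarrow> excess_le s A D'"
  unfolding excess_le_def by (meson add_left_mono less_le_trans)

lemma excess_le_subset: "excess_le s B D \<Longrightarrow> A \<subseteq> B \<Longrightarrow> finite B \<Longrightarrow> excess_le s A D"
  unfolding excess_le_def using below_count_mono by (meson le_less_trans)

lemma excess_le_scale:
  "excess_le s A D \<Longrightarrow> s \<le> s' \<Longrightarrow> A \<subseteq> {1..m} \<Longrightarrow> excess_le s' A D"
  unfolding excess_le_def using below_count_antimono_scale by (meson le_less_trans)

lemma excess_le_superset:
  assumes "excess_le s A D" "A \<subseteq> B" "finite B"
  shows "excess_le s B (D + card (B - A))"
  unfolding excess_le_def
proof (intro allI impI)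
  fix i :: nat assume "1 \<le> i"
  then have "below_count s A i < i + D" using assms(1) by (simp add: excess_le_def)
  then show "below_count s B i < i + (D + card (B - A))"
    using below_count_superset_le[OF assms(3,2), of s i] by linarith
qed

lemma excess_le_card:
  assumes "finite A"
  shows "excess_le s A (card A)"
  unfolding excess_le_def
proof (intro allI impI)
  fix i :: nat assume "1 \<le> i"
  with below_count_le_card[OF assms, of s i] show "below_count s A i < i + card A" by linarith
qed

lemma simesU_iff:
  assumes A: "A \<subseteq> {1..m}"
  shows "A \<in> simesU p m \<alpha> \<longleftrightarrow> (\<exists>i\<in>{1..card A}. i \<le> below_count (card A) A i)"
proof -
  have fin: "finite A" using A finite_subset by blast
  have "real (card A) * pord p A i \<le> real i * \<alpha> \<longleftrightarrow> i \<le> below_count (card A) A i"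
    if i: "i \<in> {1..card A}" for i
  proof -
    have pos: "real (card A) > 0" using i by auto
    have "real (card A) * pord p A i \<le> real i * \<alpha> \<longleftrightarrow> pord p A i \<le> real i * \<alpha> / real (card A)"
      using pos by (simp add: pos_le_divide_eq mult.commute)
    also have "\<dots> \<longleftrightarrow> i \<le> card {x\<in>A. p x \<le> real i * \<alpha> / real (card A)}"
      using pord_le_iff[OF fin] i by auto
    also have "{x\<in>A. p x \<le> real i * \<alpha> / real (card A)} = {x\<in>A. real (card A) * p x \<le> real i * \<alpha>}"
      using pos by (auto simp: pos_le_divide_eq mult.commute)
    finally show ?thesis by (simp add: below_count_def)
  qed
  then show ?thesis using A by (auto simp: simesU_def)
qed

lemma not_simesU_iff:
  assumes A: "A \<subseteq> {1..m}"
  shows "A \<notin> simesU p m \<alpha> \<longleftrightarrow> excess_le (card A) A 0"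
proof
  assume "A \<notin> simesU p m \<alpha>"
  then have small: "below_count (card A) A i < i" if "i \<in> {1..card A}" for i
    using simesU_iff[OF A] that by (simp add: not_le)
  have large: "below_count (card A) A i < i" if "card A < i" for i
    using below_count_le_card[of A "card A" i] A finite_subset that by fastforce
  show "excess_le (card A) A 0"
    unfolding excess_le_def
  proof (intro allI impI)
    fix i :: nat assume "1 \<le> i"
    then show "below_count (card A) A i < i + 0"
      using small large by (cases "i \<le> card A") auto
  qed
next
  assume "excess_le (card A) A 0"
  then show "A \<notin> simesU p m \<alpha>"
    using simesU_iff[OF A] by (auto simp: excess_le_def not_le)
qed

lemma not_simesU_Kset:
  assumes A: "A \<subseteq> {1..m}" "A \<notin> simesU p m \<alpha>"
  shows "Kset r m (card A) \<notin> simesU p m \<alpha>"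
proof -
  have n: "card A \<le> m" using card_mono[OF _ A(1)] by simp
  have "excess_le (card A) A 0" using not_simesU_iff A by blast
  then have "excess_le (card A) (Kset r m (card A)) 0"
    unfolding excess_le_def using below_count_Kset_le[OF A(1)] by (meson le_less_trans)
  then show ?thesis
    using not_simesU_iff[OF Kset_subset[OF n]] card_Kset[OF n] by simp
qed

section \<open>Closed testing\<close>

abbreviation h :: nat where "h \<equiv> h_alpha p m \<alpha> r"

lemma h_mem: "h \<le> m \<and> Kset r m h \<notin> simesU p m \<alpha>"
proof -
  let ?H = "{i. i \<le> m \<and> Kset r m i \<notin> simesU p m \<alpha>}"
  have "0 \<in> ?H" by (simp add: Kset_0 simesU_def)
  then have "Max ?H \<in> ?H" by (intro Max_in) auto
  then show ?thesis by (simp add: h_alpha_def)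
qed

lemma h_le_m: "h \<le> m"
  using h_mem by simp

lemma h_maximal: "i \<le> m \<Longrightarrow> Kset r m i \<notin> simesU p m \<alpha> \<Longrightarrow> i \<le> h"
  unfolding h_alpha_def by (intro Max_ge) auto

lemma card_le_h: "A \<subseteq> {1..m} \<Longrightarrow> A \<notin> simesU p m \<alpha> \<Longrightarrow> card A \<le> h"
  using not_simesU_Kset h_maximal card_mono[of "{1..m}" A] by simp

lemma Kset_Suc_h_simesU: "h < m \<Longrightarrow> Kset r m (Suc h) \<in> simesU p m \<alpha>"
  using h_maximal[of "Suc h"] by auto

lemma excess_le_Kset_h: "excess_le h (Kset r m h) 0"
  using not_simesU_iff[OF Kset_subset[OF h_le_m]] h_mem card_Kset[OF h_le_m] by simp

lemma excess_le_all: "excess_le h {1..m} (m - h)"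
proof -
  have "card ({1..m} - Kset r m h) = m - h"
    using Diff_Kset[OF h_le_m] card_Lset[of "m - h"] by simp
  then show ?thesis
    using excess_le_superset[OF excess_le_Kset_h Kset_subset[OF h_le_m]] by simp
qed

lemma card_le_h_of_excess_free:
  assumes I: "I \<subseteq> {1..m}" "excess_le h I 0"
  shows "card I \<le> h"
proof (rule ccontr)
  assume "\<not> card I \<le> h"
  then have "excess_le (card I) I 0" using excess_le_scale[OF I(2)] I(1) by simp
  then have "I \<notin> simesU p m \<alpha>" using not_simesU_iff[OF I(1)] by simp
  with card_le_h I(1) \<open>\<not> card I \<le> h\<close> show False by blast
qed

text \<open>Adding the hypotheses of largest \<open>p\<close>-value one at a time reaches size \<open>h\<close> without creating a
  Simes rejection.\<close>

lemma not_simesU_superset: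
  assumes I: "I \<subseteq> {1..m}" "excess_le h I 0"
  obtains J where "I \<subseteq> J" "J \<subseteq> {1..m}" "J \<notin> simesU p m \<alpha>"
proof -
  define f where "f j = card (I \<union> Kset r m j)" for j
  have "f (Suc k) \<le> Suc (f k)" if "k < m" for k
  proof -
    have "finite (I \<union> Kset r m k)" using I(1) finite_subset by (auto simp: Kset_def)
    then show ?thesis using Kset_Suc[OF that] by (simp add: f_def card_insert_if)
  qed
  moreover have "f 0 \<le> h" using card_le_h_of_excess_free[OF I] by (simp add: f_def Kset_0)
  moreover have "h \<le> f m" using I(1) h_le_m by (simp add: f_def Kset_m Un_absorb1)
  ultimately obtain j where j: "j \<le> m" "f j = h" using nat0_intermed_val[of m f h] by blast
  define J where "J = I \<union> Kset r m j"
  have J: "J \<subseteq> {1..m}" "card J = h"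
    using I(1) Kset_subset[OF j(1)] j(2) by (auto simp: J_def f_def)
  have "excess_le h J 0"
    unfolding excess_le_def
  proof (intro allI impI)
    fix i :: nat assume i: "1 \<le> i"
    show "below_count h J i < i + 0"
    proof (cases "below_count h (Kset r m j) i = 0")
      case True
      have "{x\<in>J. real h * p x \<le> real i * \<alpha>}
          = {x\<in>I. real h * p x \<le> real i * \<alpha>} \<union> {x\<in>Kset r m j. real h * p x \<le> real i * \<alpha>}"
        by (auto simp: J_def)
      then have "below_count h J i \<le> below_count h I i + below_count h (Kset r m j) i"
        unfolding below_count_def by (simp only: card_Un_le)
      moreover have "below_count h I i < i" using excess_leD[OF I(2) i] by simp
      ultimately show ?thesis using True by simp
    next
      case False
      have "below_count h {1..m} i = below_count h J i + (m - h)"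
        using below_count_all_eq[OF j(1) _ J(1) False] J(2) by (simp add: J_def)
      with excess_leD[OF excess_le_all i] show ?thesis by simp
    qed
  qed
  then have "J \<notin> simesU p m \<alpha>" using not_simesU_iff[OF J(1)] J(2) by simp
  moreover have "I \<subseteq> J" by (simp add: J_def)
  ultimately show ?thesis using that[OF _ J(1)] by simp
qed

lemma not_closedX_iff:
  assumes I: "I \<subseteq> {1..m}"
  shows "I \<notin> closedX p m \<alpha> \<longleftrightarrow> excess_le h I 0"
proof
  assume "I \<notin> closedX p m \<alpha>"
  then obtain J where J: "I \<subseteq> J" "J \<subseteq> {1..m}" "J \<notin> simesU p m \<alpha>"
    using I by (auto simp: closedX_def)
  have "excess_le (card J) J 0" using not_simesU_iff[OF J(2)] J(3) by simp
  then have "excess_le h J 0" using excess_le_scale card_le_h[OF J(2,3)] J(2) by simp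
  moreover have "finite J" using J(2) finite_subset by blast
  ultimately show "excess_le h I 0" using excess_le_subset J(1) by simp
next
  assume "excess_le h I 0"
  then obtain J where "I \<subseteq> J" "J \<subseteq> {1..m}" "J \<notin> simesU p m \<alpha>"
    using not_simesU_superset[OF I] by blast
  then show "I \<notin> closedX p m \<alpha>" by (auto simp: closedX_def)
qed

definition excess :: "nat set \<Rightarrow> nat" where
  "excess S = (LEAST D. excess_le h S D)"

lemma excess_le_excess: "finite S \<Longrightarrow> excess_le h S (excess S)"
  unfolding excess_def using excess_le_card by (rule LeastI)

lemma excess_le_iff:
  assumes "finite S"
  shows "excess S \<le> D \<longleftrightarrow> excess_le h S D"
proof
  assume "excess S \<le> D"
  then show "excess_le h S D" using excess_le_mono excess_le_excess[OF assms] by blast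
next
  assume "excess_le h S D"
  then show "excess S \<le> D" unfolding excess_def by (rule Least_le)
qed

lemma excess_le_card_self: "finite S \<Longrightarrow> excess S \<le> card S"
  by (simp add: excess_le_iff excess_le_card)

lemma excess_mono:
  assumes "A \<subseteq> B" "finite B"
  shows "excess A \<le> excess B"
proof -
  have "excess_le h A (excess B)"
    using excess_le_subset[OF excess_le_excess[OF assms(2)] assms] .
  moreover have "finite A" using assms finite_subset by blast
  ultimately show ?thesis by (simp add: excess_le_iff)
qed

lemma card_add_excess_le:
  assumes "finite S" "I \<subseteq> S" "excess_le h I 0"
  shows "card I + excess S \<le> card S"
proof -
  have "excess_le h S (card (S - I))"
    using excess_le_superset[OF assms(3,2,1)] by simp
  then have "excess S \<le> card S - card I"
    using excess_le_iff assms by (simp add: card_Diff_subset finite_subset)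
  moreover have "card I \<le> card S" using assms by (simp add: card_mono)
  ultimately show ?thesis by linarith
qed

text \<open>Removing the \<open>excess S\<close> hypotheses of \<open>S\<close> with smallest \<open>p\<close>-values leaves no excess.\<close>

lemma exists_excess_free_subset:
  assumes S: "S \<subseteq> {1..m}"
  obtains I where "I \<subseteq> S" "excess_le h I 0" "card I = card S - excess S"
proof -
  have fin: "finite S" using S finite_subset by blast
  define f where "f k = card (S \<inter> Lset r k)" for k
  have "f (Suc k) \<le> Suc (f k)" for k
  proof -
    have "S \<inter> Lset r (Suc k) \<subseteq> insert (r (Suc k)) (S \<inter> Lset r k)"
      by (auto simp: Lset_Suc)
    then have "f (Suc k) \<le> card (insert (r (Suc k)) (S \<inter> Lset r k))"
      unfolding f_def using fin by (intro card_mono) auto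
    also have "\<dots> \<le> Suc (f k)" by (simp add: f_def card_insert_le_m1 card_insert_if)
    finally show ?thesis .
  qed
  moreover have "f 0 \<le> excess S" by (simp add: f_def Lset_def)
  moreover have "excess S \<le> f m"
    using excess_le_card_self[OF fin] S by (simp add: f_def Lset_m Int_absorb2)
  ultimately obtain k where k: "k \<le> m" "f k = excess S"
    using nat0_intermed_val[of m f "excess S"] by blast
  define I where "I = S - Lset r k"
  have "excess_le h I 0"
    unfolding excess_le_def
  proof (intro allI impI)
    fix i :: nat assume i: "1 \<le> i"
    show "below_count h I i < i + 0"
    proof (cases "below_count h I i = 0")
      case False
      then have "{x\<in>I. real h * p x \<le> real i * \<alpha>} \<noteq> {}"
        by (metis card.empty below_count_def)
      then obtain x where x: "x \<in> I" "real h * p x \<le> real i * \<alpha>" by blast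
      then have "x \<in> r ` {1..m}" using S r_image by (auto simp: I_def)
      then obtain j where j: "j \<in> {1..m}" "x = r j" by blast
      then have "k < j" using x by (auto simp: I_def Lset_def)
      then have "\<forall>y\<in>S - I. real h * p y \<le> real i * \<alpha>"
        using Lset_below[OF j(1), of h "real i * \<alpha>" k] x j by (auto simp: I_def)
      then have "{y\<in>S - I. real h * p y \<le> real i * \<alpha>} = S \<inter> Lset r k"
        by (auto simp: I_def)
      then have "below_count h S i = below_count h I i + excess S"
        using below_count_split[OF fin, of I h i] k by (auto simp: I_def f_def)
      with excess_leD[OF excess_le_excess[OF fin] i] show ?thesis by simp
    qed (use i in simp)
  qed
  moreover have "card I = card S - excess S"
    using k fin by (simp add: I_def f_def card_Diff_subset_Int Int_commute)
  moreover have "I \<subseteq> S" by (simp add: I_def)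
  ultimately show ?thesis using that by blast
qed

lemma d_alpha_eq_excess:
  assumes S: "S \<subseteq> {1..m}"
  shows "d_alpha p m \<alpha> S = excess S"
proof -
  have fin: "finite S" using S finite_subset by blast
  let ?T = "{card I | I. I \<subseteq> S \<and> I \<notin> closedX p m \<alpha>}"
  have "Max ?T = card S - excess S"
  proof (rule Max_eqI)
    have "?T \<subseteq> {..card S}" using fin by (auto intro: card_mono)
    then show "finite ?T" using finite_subset by blast
  next
    fix y assume "y \<in> ?T"
    then obtain I where I: "y = card I" "I \<subseteq> S" "I \<notin> closedX p m \<alpha>" by blast
    then have "excess_le h I 0" using not_closedX_iff S by blast
    with I card_add_excess_le[OF fin I(2)] show "y \<le> card S - excess S" by simp
  next
    obtain I where I: "I \<subseteq> S" "excess_le h I 0" "card I = card S - excess S"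
      using exists_excess_free_subset[OF S] by blast
    then have "I \<notin> closedX p m \<alpha>" using not_closedX_iff S by blast
    with I show "card S - excess S \<in> ?T" by (metis (mono_tags, lifting) mem_Collect_eq)
  qed
  then show ?thesis
    using excess_le_card_self[OF fin] by (simp add: d_alpha_def t_alpha_def)
qed

section \<open>The minimal set Z\<close>

abbreviation z :: nat where "z \<equiv> z_alpha p m \<alpha> r"

abbreviation Z :: "nat set" where "Z \<equiv> Z_alpha p m \<alpha> r"

text \<open>For \<open>h < m\<close>, \<open>u\<close> is the Simes index at which the \<open>z\<close>-th smallest \<open>p\<close>-value is rejected:
  \<open>h p\<^sub>(\<^sub>z\<^sub>) \<le> u \<alpha>\<close> with \<open>z = u + (m - h) - 1\<close>.\<close>

abbreviation u :: nat where "u \<equiv> z + h + 1 - m"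

lemma exists_rejected_at_Suc_h:
  assumes hm: "h < m"
  obtains i where "1 \<le> i" "i \<le> Suc h" "real (Suc h) * p (r (i + (m - Suc h))) \<le> real i * \<alpha>"
proof -
  have n: "Suc h \<le> m" using hm by simp
  let ?K = "Kset r m (Suc h)"
  obtain i where i: "i \<in> {1..Suc h}" "i \<le> below_count (Suc h) ?K i"
    using Kset_Suc_h_simesU[OF hm] simesU_iff[OF Kset_subset[OF n]] card_Kset[OF n] by auto
  then have "below_count (Suc h) ?K i \<noteq> 0" by auto
  from below_count_all_eq[OF n order_refl Kset_subset[OF n] this] card_Kset[OF n] i(2)
  have "i + (m - Suc h) \<le> card {x\<in>{1..m}. real (Suc h) * p x \<le> real i * \<alpha>}"
    by (simp add: below_count_def)
  moreover have "i + (m - Suc h) \<in> {1..m}" using i n by auto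
  ultimately have rej: "real (Suc h) * p (r (i + (m - Suc h))) \<le> real i * \<alpha>"
    using rank_below_iff by blast
  show ?thesis by (rule that[OF _ _ rej]) (use i in auto)
qed

lemma z_mem_least:
  assumes hm: "h < m"
  shows "m - h \<le> z" "z \<le> m" "real h * p (r z) \<le> real u * \<alpha>"
    and "\<And>j. m - h \<le> j \<Longrightarrow> j \<le> m \<Longrightarrow> real h * p (r j) \<le> real (j + h + 1 - m) * \<alpha> \<Longrightarrow> z \<le> j"
proof -
  let ?C = "{j. m - h \<le> j \<and> j \<le> m \<and> real h * p (r j) \<le> real (j + h + 1 - m) * \<alpha>}"
  have e: "real (j + h + 1 - m) = real j - real m + real h + 1" if "m - h \<le> j" for j
    using that hm by (simp add: of_nat_diff)
  have C: "{j. m - h \<le> j \<and> j \<le> m \<and> real h * p (r j) \<le> (real j - real m + real h + 1) * \<alpha>} = ?C"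
    by (auto simp: e algebra_simps)
  have z: "z = Min ?C" using hm by (simp add: z_alpha_def Let_def C)
  obtain i where i: "1 \<le> i" "i \<le> Suc h" "real (Suc h) * p (r (i + (m - Suc h))) \<le> real i * \<alpha>"
    using exists_rejected_at_Suc_h[OF hm] by blast
  let ?j = "i + (m - Suc h)"
  have "?j \<in> {1..m}" using i hm by auto
  then have "0 \<le> p (r ?j)" using p_nonneg r_image by blast
  then have "real h * p (r ?j) \<le> real (Suc h) * p (r ?j)" by (simp add: mult_right_mono)
  moreover have "?j + h + 1 - m = i" using i hm by simp
  ultimately have "?j \<in> ?C" using i hm by auto
  then have "z \<in> ?C" unfolding z by (intro Min_in) auto
  then show "m - h \<le> z" "z \<le> m" "real h * p (r z) \<le> real u * \<alpha>" by auto
  show "z \<le> j" if "m - h \<le> j" "j \<le> m" "real h * p (r j) \<le> real (j + h + 1 - m) * \<alpha>" for j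
    unfolding z using that by (intro Min_le) auto
qed

lemma z_le_m: "z \<le> m"
  using z_mem_least(2) h_le_m by (cases "h = m") (auto simp: z_alpha_def)

lemma z_Suc_eq: "z + 1 = u + (m - h)"
  using z_mem_least(1) h_le_m by (cases "h = m") (auto simp: z_alpha_def)

lemma one_le_u: "1 \<le> u"
  using z_mem_least(1) h_le_m by (cases "h = m") (auto simp: z_alpha_def)

lemma Z_eq: "Z = Lset r z"
  by (simp add: Z_alpha_def)

lemma Z_subset: "Z \<subseteq> {1..m}"
  using Lset_subset[OF z_le_m] by (simp add: Z_eq)

lemma card_Z: "card Z = z"
  using card_Lset[OF z_le_m] by (simp add: Z_eq)

lemma Z_h_eq_m: "h = m \<Longrightarrow> Z = {}"
  by (simp add: Z_eq z_alpha_def Lset_def)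

lemma below_of_mem_Z:
  assumes "u \<le> i" "x \<in> Z"
  shows "real h * p x \<le> real i * \<alpha>"
proof -
  have hm: "h < m" using assms(2) Z_h_eq_m h_le_m by fastforce
  then have "z \<in> {1..m}" using z_mem_least(1,2) by auto
  moreover have "real u * \<alpha> \<le> real i * \<alpha>"
    using assms(1) alpha_nonneg by (simp add: mult_right_mono)
  then have "real h * p (r z) \<le> real i * \<alpha>"
    using z_mem_least(3)[OF hm] by linarith
  ultimately show ?thesis using Lset_below[of z h _ z x] assms(2) Z_eq by simp
qed

lemma below_count_Z:
  assumes "u \<le> i"
  shows "below_count h Z i = z"
proof -
  have "{x\<in>Z. real h * p x \<le> real i * \<alpha>} = Z" using below_of_mem_Z[OF assms] by blast
  then show ?thesis using card_Z by (simp add: below_count_def)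
qed

lemma mem_Z_of_below:
  assumes i: "1 \<le> i" "i \<le> u" and x: "x \<in> {1..m}" "real h * p x \<le> real i * \<alpha>"
  shows "x \<in> Z"
proof -
  have "x \<in> r ` {1..m}" using x(1) r_image by simp
  then obtain j where j: "j \<in> {1..m}" "x = r j" by blast
  then have "j \<le> below_count h {1..m} i"
    using rank_below_iff x(2) by (simp add: below_count_def)
  moreover have "below_count h {1..m} i < i + (m - h)" using excess_leD[OF excess_le_all i(1)] .
  ultimately have "j \<le> z" using z_Suc_eq i(2) by linarith
  then show ?thesis using j by (auto simp: Z_eq Lset_def)
qed

lemma below_count_outside_Z:
  assumes "u \<le> i"
  shows "card {x\<in>{1..m} - Z. real h * p x \<le> real i * \<alpha>} \<le> i - u"
proof -
  have "below_count h {1..m} i = z + card {x\<in>{1..m} - Z. real h * p x \<le> real i * \<alpha>}"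
    using below_count_split[OF _ Z_subset, of h i] below_count_Z[OF assms] by simp
  moreover have "below_count h {1..m} i < i + (m - h)"
    using excess_leD[OF excess_le_all] assms one_le_u by simp
  ultimately show ?thesis using z_Suc_eq by linarith
qed

lemma excess_Int_Z:
  assumes S: "S \<subseteq> {1..m}"
  shows "excess S = excess (S \<inter> Z)"
proof (rule antisym)
  have fin: "finite S" using S finite_subset by blast
  let ?D = "excess (S \<inter> Z)"
  have SZ: "excess_le h (S \<inter> Z) ?D" using excess_le_excess fin by simp
  have "excess_le h S ?D"
    unfolding excess_le_def
  proof (intro allI impI)
    fix i :: nat assume i: "1 \<le> i"
    show "below_count h S i < i + ?D"
    proof (cases "i \<le> u")
      case True
      then have "{x\<in>S. real h * p x \<le> real i * \<alpha>} = {x\<in>S \<inter> Z. real h * p x \<le> real i * \<alpha>}"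
        using mem_Z_of_below[OF i] S by blast
      then show ?thesis using excess_leD[OF SZ i] by (simp add: below_count_def)
    next
      case False
      have "below_count h S i = below_count h (S \<inter> Z) i + card {x\<in>S - S \<inter> Z. real h * p x \<le> real i * \<alpha>}"
        using below_count_split[OF fin] by blast
      moreover have "below_count h (S \<inter> Z) i \<le> card (S \<inter> Z)"
        using below_count_le_card fin by simp
      moreover have "{x\<in>S \<inter> Z. real h * p x \<le> real u * \<alpha>} = S \<inter> Z"
        using below_of_mem_Z[OF order_refl] by blast
      then have "below_count h (S \<inter> Z) u = card (S \<inter> Z)" by (simp add: below_count_def)
      moreover have "card {x\<in>S - S \<inter> Z. real h * p x \<le> real i * \<alpha>}
          \<le> card {x\<in>{1..m} - Z. real h * p x \<le> real i * \<alpha>}"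
        using S by (intro card_mono) auto
      moreover have "card {x\<in>{1..m} - Z. real h * p x \<le> real i * \<alpha>} \<le> i - u"
        using below_count_outside_Z False by simp
      moreover have "below_count h (S \<inter> Z) u < u + ?D" using excess_leD[OF SZ one_le_u] .
      ultimately show ?thesis using False by linarith
    qed
  qed
  then show "excess S \<le> ?D" using excess_le_iff fin by blast
  show "?D \<le> excess S" using excess_mono fin by simp
qed

lemma excess_Z: "excess Z = m - h"
proof (rule antisym)
  have fin: "finite Z" using Z_subset finite_subset by blast
  have "excess_le h Z (m - h)" using excess_le_subset[OF excess_le_all Z_subset] by simp
  then show "excess Z \<le> m - h" using excess_le_iff fin by blast
  have "below_count h Z u < u + excess Z"
    using excess_leD[OF excess_le_excess[OF fin] one_le_u] .
  then show "m - h \<le> excess Z" using below_count_Z z_Suc_eq by simp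
qed

text \<open>Below \<open>u\<close> the elements of \<open>Z\<close> are too few to reach excess \<open>m - h\<close>, by minimality of \<open>z\<close>;
  so the full excess is attained only at \<open>u\<close>, where every element of \<open>Z\<close> counts.\<close>

lemma excess_Diff_mem_Z:
  assumes hm: "h < m" and x: "x \<in> Z"
  shows "excess (Z - {x}) < m - h"
proof -
  have fin: "finite Z" using Z_subset finite_subset by blast
  have "excess_le h (Z - {x}) (m - h - 1)"
    unfolding excess_le_def
  proof (intro allI impI)
    fix i :: nat assume i: "1 \<le> i"
    show "below_count h (Z - {x}) i < i + (m - h - 1)"
    proof (cases "u \<le> i")
      case True
      have "below_count h (Z - {x}) i \<le> card (Z - {x})" using below_count_le_card fin by simp
      also have "\<dots> = z - 1" using card_Z x by simp
      finally show ?thesis using True z_Suc_eq z_mem_least(1)[OF hm] hm by linarith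
    next
      case False
      let ?j = "i + (m - h - 1)"
      have "?j \<in> {1..m}" using i False z_Suc_eq z_le_m by auto
      have "below_count h Z i < ?j"
      proof (rule ccontr)
        assume "\<not> below_count h Z i < ?j"
        moreover have "below_count h Z i \<le> below_count h {1..m} i"
          using Z_subset by (rule below_count_mono) simp
        ultimately have "?j \<le> card {y\<in>{1..m}. real h * p y \<le> real i * \<alpha>}"
          unfolding below_count_def by linarith
        then have "real h * p (r ?j) \<le> real (?j + h + 1 - m) * \<alpha>"
          using rank_below_iff[OF \<open>?j \<in> {1..m}\<close>, of h "real i * \<alpha>"] hm by simp
        moreover have "m - h \<le> ?j" using i by linarith
        ultimately have "z \<le> ?j" using z_mem_least(4)[OF hm] \<open>?j \<in> {1..m}\<close> by simp
        then show False using False z_Suc_eq hm by linarith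
      qed
      moreover have "below_count h (Z - {x}) i \<le> below_count h Z i"
        using fin by (intro below_count_mono) auto
      ultimately show ?thesis by linarith
    qed
  qed
  then have "excess (Z - {x}) \<le> m - h - 1" using excess_le_iff fin by simp
  then show ?thesis using hm by linarith
qed

lemma d_alpha_Int_Z:
  assumes S: "S \<subseteq> {1..m}"
  shows "d_alpha p m \<alpha> S = d_alpha p m \<alpha> (S \<inter> Z)"
proof -
  have "S \<inter> Z \<subseteq> {1..m}" using S by blast
  then show ?thesis using d_alpha_eq_excess[OF S] d_alpha_eq_excess excess_Int_Z[OF S] by simp
qed

lemma d_alpha_Z: "d_alpha p m \<alpha> Z = m - h"
  using d_alpha_eq_excess[OF Z_subset] excess_Z by simp

lemma Z_minimal:
  assumes Y: "Y \<subseteq> {1..m}" and d: "\<forall>S. S \<subseteq> {1..m} \<longrightarrow> d_alpha p m \<alpha> S = d_alpha p m \<alpha> (S \<inter> Y)"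
  shows "Z \<subseteq> Y"
proof (rule ccontr)
  assume "\<not> Z \<subseteq> Y"
  then obtain x where x: "x \<in> Z" "x \<notin> Y" by blast
  then have hm: "h < m" using Z_h_eq_m h_le_m by fastforce
  have fin: "finite (Z - {x})" using Z_subset finite_subset by blast
  have ZY: "Z \<inter> Y \<subseteq> {1..m}" "Z \<inter> Y \<subseteq> Z - {x}" using Z_subset x by auto
  have "d_alpha p m \<alpha> Z = d_alpha p m \<alpha> (Z \<inter> Y)" using d Z_subset by blast
  then have "m - h = d_alpha p m \<alpha> (Z \<inter> Y)" using d_alpha_Z by simp
  also have "\<dots> = excess (Z \<inter> Y)" using d_alpha_eq_excess[OF ZY(1)] .
  also have "\<dots> \<le> excess (Z - {x})" using excess_mono[OF ZY(2) fin] .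
  also have "\<dots> < m - h" using excess_Diff_mem_Z[OF hm x(1)] .
  finally show False by simp
qed

lemma z_le_b: "z \<le> b_alpha p m \<alpha> r"
proof (cases "h < m")
  case hm: True
  obtain i where i: "1 \<le> i" "i \<le> Suc h" "real (Suc h) * p (r (i + (m - Suc h))) \<le> real i * \<alpha>"
    using exists_rejected_at_Suc_h[OF hm] by blast
  define j where "j = i + (m - Suc h)"
  define H where "H = real (Suc h)"
  have j: "1 \<le> j" "j \<le> m" using i hm by (auto simp: j_def)
  have "r j \<in> {1..m}" using r_image j by auto
  then have "0 \<le> p (r j)" using p_nonneg by blast
  then have "real h * p (r j) \<le> H * p (r j)" by (simp add: H_def mult_right_mono)
  then have "z \<le> j" using z_mem_least(4)[OF hm, of j] i hm by (simp add: j_def H_def)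
  text \<open>\<open>H p\<^sub>(\<^sub>j\<^sub>) \<le> i \<alpha>\<close> implies the Benjamini--Hochberg condition at \<open>j\<close> because \<open>m i \<le> H j\<close>.\<close>
  have "real m * real i \<le> real j * H"
  proof -
    have "0 \<le> (real m - H) * (H - real i)" using i hm by (simp add: H_def)
    then have "real m * real i \<le> (real i + real m - H) * H" by (simp add: algebra_simps)
    also have "real i + real m - H = real j" using i hm by (simp add: j_def H_def of_nat_diff)
    finally show ?thesis .
  qed
  have "H * (real m * p (r j)) = real m * (H * p (r j))" by simp
  also have "\<dots> \<le> real m * (real i * \<alpha>)"
    using i(3) by (simp add: j_def H_def mult_left_mono)
  also have "\<dots> = (real m * real i) * \<alpha>" by simp
  also have "\<dots> \<le> (real j * H) * \<alpha>"
    using \<open>real m * real i \<le> real j * H\<close> alpha_nonneg by (rule mult_right_mono)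
  also have "\<dots> = H * (real j * \<alpha>)" by simp
  finally have "real m * p (r j) \<le> real j * \<alpha>" by (simp add: H_def)
  then have "j \<le> b_alpha p m \<alpha> r" using j unfolding b_alpha_def by (intro Max_ge) auto
  with \<open>z \<le> j\<close> show ?thesis by simp
next
  case False
  then show ?thesis using h_le_m by (simp add: z_alpha_def)
qed

lemma Z_subset_B: "Z \<subseteq> B_alpha p m \<alpha> r"
  using z_le_b by (auto simp: Z_eq B_alpha_def Lset_def)

end

theorem lemma4:
  fixes p :: "nat \<Rightarrow> real" and m :: nat and \<alpha> :: real and r :: "nat \<Rightarrow> nat"
  assumes p01: "\<forall>j\<in>{1..m}. 0 \<le> p j \<and> p j \<le> 1"
    and alpha01: "0 \<le> \<alpha>" "\<alpha> \<le> 1"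
    and sorted: "sorting_perm p m r"
  shows "(\<forall>S. S \<subseteq> {1..m} \<longrightarrow>
            d_alpha p m \<alpha> S = d_alpha p m \<alpha> (S \<inter> Z_alpha p m \<alpha> r))
       \<and> (\<forall>Y. Y \<subseteq> {1..m} \<longrightarrow>
            (\<forall>S. S \<subseteq> {1..m} \<longrightarrow> d_alpha p m \<alpha> S = d_alpha p m \<alpha> (S \<inter> Y)) \<longrightarrow>
            Z_alpha p m \<alpha> r \<subseteq> Y)
       \<and> d_alpha p m \<alpha> (Z_alpha p m \<alpha> r) = m - h_alpha p m \<alpha> r
       \<and> Z_alpha p m \<alpha> r \<subseteq> B_alpha p m \<alpha> r"
proof -
  \<comment> \<open>Only the nonnegativity of the \<open>p\<close>-values and of \<open>\<alpha>\<close> is needed.\<close>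
  interpret sorted_pvalues p m \<alpha> r
    using p01 alpha01(1) sorted by unfold_locales auto
  show ?thesis
  proof (intro conjI allI impI)
    fix S assume "S \<subseteq> {1..m}"
    then show "d_alpha p m \<alpha> S = d_alpha p m \<alpha> (S \<inter> Z_alpha p m \<alpha> r)"
      by (rule d_alpha_Int_Z)
  next
    fix Y assume "Y \<subseteq> {1..m}"
      and "\<forall>S. S \<subseteq> {1..m} \<longrightarrow> d_alpha p m \<alpha> S = d_alpha p m \<alpha> (S \<inter> Y)"
    then show "Z_alpha p m \<alpha> r \<subseteq> Y" by (rule Z_minimal)
  qed (fact d_alpha_Z Z_subset_B)+
qed

end
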